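(* Let $x$ be a sequence of length $n$ and $i,j\in\{1,\ldots,n-1\}$ with $i\ne j$. Then $\tau(x,i)\not\approx_{CT}\tau(x,j)$.
   Context: Sequences are finite sequences of pairwise distinct integers indexed from $1$. For $1\le i\le n-1$, $\tau(x,i)$ is obtained from $x$ by exchanging $x[i]$ and $x[i+1]$. The Cartesian tree $C(x)$ of a sequence $x$ of length $n$ is empty if $n=0$; otherwise, if $x[i]$ is the minimum of $x$, it is the binary tree with root $i$, left subtree $C(x[1\ldots i-1])$ and right subtree $C(x[i+1\ldots n])$. $x\approx_{CT} y$ means $C(x)=C(y)$. *)

theory Defs
  imports Main "HOL-Library.Tree"
begin

text \<open>Sequences are lists of pairwise distinct integers; position p (1-based)
  corresponds to list index p - 1.\<close>

definition tau :: "int list \<Rightarrow> nat \<Rightarrow> int list" where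
  "tau x i = x[i - 1 := x ! i, i := x ! (i - 1)]"

definition minpos :: "int list \<Rightarrow> nat" where
  "minpos xs = length (takeWhile (\<lambda>y. y \<noteq> Min (set xs)) xs)"

lemma takeWhile_less_aux: "a \<in> set xs \<Longrightarrow> length (takeWhile (\<lambda>y. y \<noteq> a) xs) < length xs"
  by (induction xs) auto

lemma minpos_less: "xs \<noteq> [] \<Longrightarrow> minpos xs < length xs"
  unfolding minpos_def
  by (rule takeWhile_less_aux) simp

text \<open>Cartesian tree: root labelled by the 1-based position of the minimum,
  left subtree the tree of the prefix, right subtree the tree of the suffix
  (labels of each subtree are positions within the respective subsequence).\<close>
function CT :: "int list \<Rightarrow> nat tree" where
  "CT xs = (if xs = [] then Leaf
            else Node (CT (take (minpos xs) xs)) (Suc (minpos xs)) (CT (drop (Suc (minpos xs)) xs)))"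
  by pat_completeness auto
termination
  by (relation "measure length") (auto dest: minpos_less)

definition ct_equiv :: "int list \<Rightarrow> int list \<Rightarrow> bool" (infix "\<approx>\<^sub>C\<^sub>T" 50) where
  "x \<approx>\<^sub>C\<^sub>T y \<longleftrightarrow> CT x = CT y"

end

theory Submission
  imports Defs
begin

text \<open>For distinct entries the Cartesian tree determines the relative order of any two
  adjacent entries: either both lie in the same subtree of the root, or one of them is the
  minimum at the root. Now \<open>\<tau>(x,i)\<close> reverses the comparison of positions \<open>i\<close>, \<open>i+1\<close> of \<open>x\<close>,
  while \<open>\<tau>(x,j)\<close> for \<open>j > i + 1\<close> preserves it. For \<open>j = i + 1\<close> the comparisons of the three
  entries \<open>a, b, c\<close> at positions \<open>i, i+1, i+2\<close> would have to satisfy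
  \<open>b < a \<longleftrightarrow> a < c \<longleftrightarrow> c < b\<close>, i.e. form a cycle.\<close>

declare CT.simps[simp del]

lemma CT_Nil [simp]: "CT [] = Leaf"
  by (simp add: CT.simps)

lemma CT_nonempty:
  "xs \<noteq> [] \<Longrightarrow>
    CT xs = Node (CT (take (minpos xs) xs)) (Suc (minpos xs)) (CT (drop (Suc (minpos xs)) xs))"
  by (simp add: CT.simps)

lemma size_CT [simp]: "size (CT xs) = length xs"
proof (induction xs rule: length_induct)
  case (1 xs)
  show ?case
  proof (cases "xs = []")
    case False
    then show ?thesis
      using 1 minpos_less[OF False] by (simp add: CT_nonempty min_def)
  qed simp
qed

lemma nth_minpos: "xs \<noteq> [] \<Longrightarrow> xs ! minpos xs = Min (set xs)"
  using minpos_less[of xs] nth_length_takeWhile[of "\<lambda>y. y \<noteq> Min (set xs)" xs]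
  unfolding minpos_def by auto

lemma nth_minpos_less:
  assumes "distinct xs" "k < length xs" "k \<noteq> minpos xs"
  shows "xs ! minpos xs < xs ! k"
proof -
  have "xs \<noteq> []" using assms(2) by auto
  then have "xs ! minpos xs \<le> xs ! k" and "minpos xs < length xs"
    using assms(2) nth_minpos minpos_less by auto
  moreover have "xs ! k \<noteq> xs ! minpos xs"
    using assms \<open>minpos xs < length xs\<close> nth_eq_iff_index_eq by blast
  ultimately show ?thesis by simp
qed

lemma CT_eq_imp_adjacent_less_iff:
  assumes "distinct xs" "distinct ys" "CT xs = CT ys" "Suc k < length xs"
  shows "xs ! k < xs ! Suc k \<longleftrightarrow> ys ! k < ys ! Suc k"
  using assms
proof (induction xs arbitrary: ys k rule: length_induct)
  case (1 xs)
  have len: "length ys = length xs"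
    using size_CT[of xs] size_CT[of ys] \<open>CT xs = CT ys\<close> by simp
  then have ne: "xs \<noteq> []" "ys \<noteq> []" using \<open>Suc k < length xs\<close> by auto
  define m where "m = minpos xs"
  have m: "m < length xs" "minpos ys = m"
    using minpos_less[OF ne(1)] \<open>CT xs = CT ys\<close> by (auto simp: m_def CT_nonempty[OF ne(1)] CT_nonempty[OF ne(2)])
  have left: "CT (take m xs) = CT (take m ys)" and right: "CT (drop (Suc m) xs) = CT (drop (Suc m) ys)"
    using \<open>CT xs = CT ys\<close> m(2) by (auto simp: m_def CT_nonempty[OF ne(1)] CT_nonempty[OF ne(2)])
  consider "Suc k < m" | "k = m" | "Suc k = m" | "m < k" by linarith
  then show ?case
  proof cases
    case 1
    then show ?thesis
      using "1.IH"[rule_format, of "take m xs" "take m ys" k] left "1.prems" m(1) by auto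
  next
    case 2
    then show ?thesis
      using nth_minpos_less[of xs "Suc k"] nth_minpos_less[of ys "Suc k"] "1.prems" len m
      by (auto simp: m_def)
  next
    case 3
    then show ?thesis
      using nth_minpos_less[of xs k] nth_minpos_less[of ys k] "1.prems" len m
      by (auto simp: m_def)
  next
    case 4
    define k' where "k' = k - Suc m"
    have k: "k = Suc m + k'" using 4 by (simp add: k'_def)
    show ?thesis
      using "1.IH"[rule_format, of "drop (Suc m) xs" "drop (Suc m) ys" k'] right "1.prems" len
      unfolding k by auto
  qed
qed

lemma length_tau [simp]: "length (tau x i) = length x"
  by (simp add: tau_def)

lemma distinct_tau: "distinct x \<Longrightarrow> 0 < i \<Longrightarrow> i < length x \<Longrightarrow> distinct (tau x i)"
  by (simp add: tau_def distinct_swap)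

lemma CT_tau_neq_of_less:
  assumes "distinct x" "0 < i" "i < j" "j < length x"
  shows "CT (tau x i) \<noteq> CT (tau x j)"
proof
  assume "CT (tau x i) = CT (tau x j)"
  then have same_order: "tau x i ! k < tau x i ! Suc k \<longleftrightarrow> tau x j ! k < tau x j ! Suc k"
    if "Suc k < length x" for k
    using CT_eq_imp_adjacent_less_iff distinct_tau assms that by simp
  obtain p where p: "i = Suc p" using assms(2) by (cases i) auto
  have "x ! p \<noteq> x ! i" using assms p by (simp add: nth_eq_iff_index_eq)
  consider "j = Suc i" | "Suc i < j" using assms(3) by linarith
  then show False
  proof cases
    case 1
    have "x ! i \<noteq> x ! j" "x ! p \<noteq> x ! j" using assms p 1 by (simp_all add: nth_eq_iff_index_eq)
    moreover have "x ! i < x ! p \<longleftrightarrow> x ! p < x ! j" "x ! p < x ! j \<longleftrightarrow> x ! j < x ! i"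
      using same_order[of p] same_order[of i] assms p 1 by (simp_all add: tau_def nth_list_update)
    ultimately show False using \<open>x ! p \<noteq> x ! i\<close> by linarith
  next
    case 2
    have "x ! i < x ! p \<longleftrightarrow> x ! p < x ! i"
      using same_order[of p] assms p 2 by (simp add: tau_def nth_list_update)
    then show False using \<open>x ! p \<noteq> x ! i\<close> by linarith
  qed
qed

theorem lemma6:
  fixes x :: "int list" and i j :: nat
  assumes "distinct x"
    and "1 \<le> i" and "i \<le> length x - 1"
    and "1 \<le> j" and "j \<le> length x - 1"
    and "i \<noteq> j"
  shows "\<not> (tau x i \<approx>\<^sub>C\<^sub>T tau x j)"
proof -
  have "i < length x" "j < length x" using assms by linarith+
  then have "CT (tau x i) \<noteq> CT (tau x j)"
    using CT_tau_neq_of_less[of x i j] CT_tau_neq_of_less[of x j i] assms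
    by (cases "i < j") auto
  then show ?thesis by (simp add: ct_equiv_def)
qed

end
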